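(* Let $R$ be a commutative ring with identity and $I$ an ideal of $R$. Then the amalgamated duplication $R\bowtie I$ is a properly zipped ring if and only if $R$ is properly zipped.
   Context: $R\bowtie I:=\{(r,r+i)\mid r\in R,\ i\in I\}$, a subring of $R\times R$. A commutative ring $A$ is properly zipped if whenever a prime ideal $\mathfrak{p}$ of $A$ contains the intersection of a family $\{\mathfrak{p}_i\}_i$ of prime ideals of $A$, then $\mathfrak{p}_i\subseteq\mathfrak{p}$ for some $i$. *)

theory Defs
  imports "HOL-Algebra.Algebra"
begin

definition amalg_dup :: "('a, 'b) ring_scheme \<Rightarrow> 'a set \<Rightarrow> ('a \<times> 'a) ring" where
  "amalg_dup R I = (RDirProd R R)
     \<lparr>carrier := {(r, r \<oplus>\<^bsub>R\<^esub> i) | r i. r \<in> carrier R \<and> i \<in> I}\<rparr>"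

definition properly_zipped :: "('a, 'b) ring_scheme \<Rightarrow> bool" where
  "properly_zipped A \<longleftrightarrow>
     (\<forall>p F. primeideal p A \<and> (\<forall>q\<in>F. primeideal q A) \<and> \<Inter>F \<subseteq> p \<longrightarrow> (\<exists>q\<in>F. q \<subseteq> p))"

end

theory Submission
  imports Defs
begin

text \<open>The projections \<open>fst, snd: R \<bowtie> I \<rightarrow> R\<close> are surjective ring homomorphisms with the
  common section \<open>s \<mapsto> (s, s)\<close>, and their kernels annihilate each other. Hence every prime
  \<open>Q\<close> of \<open>R \<bowtie> I\<close> contains one of the two kernels and is the preimage, under the corresponding
  projection \<open>\<pi>\<close>, of its diagonal contraction \<open>p\<close>; the two preimages of \<open>p\<close> coincide when
  \<open>I \<subseteq> p\<close>.

  Being properly zipped passes to homomorphic images, which gives one direction. Conversely,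
  let primes \<open>q\<^sub>k = \<pi>\<^sub>k\<inverse>(p\<^sub>k)\<close> have their intersection inside \<open>Q = \<pi>\<inverse>(p)\<close>. If \<open>I \<subseteq> p\<close>,
  contracting along the diagonal reduces everything to \<open>R\<close>. Otherwise pick \<open>t \<in> I - p\<close>: for
  \<open>s\<close> in every \<open>p\<^sub>k\<close> with \<open>\<pi>\<^sub>k = \<pi>\<close>, the element of \<open>R \<bowtie> I\<close> with \<open>\<pi>\<close>-coordinate \<open>s t\<close> and
  other coordinate \<open>0\<close> lies in every \<open>q\<^sub>k\<close>, hence in \<open>Q\<close>, so \<open>s t \<in> p\<close> and \<open>s \<in> p\<close>. Thus
  only the \<open>q\<^sub>k\<close> with \<open>\<pi>\<^sub>k = \<pi>\<close> matter, and since \<open>R\<close> is properly zipped one of their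
  contractions \<open>p\<^sub>k\<close> lies in \<open>p\<close>, i.e. \<open>q\<^sub>k \<subseteq> Q\<close>.\<close>

lemma primeideal_subset_carrier: "primeideal p R \<Longrightarrow> p \<subseteq> carrier R"
  using additive_subgroup.a_subset ideal.axioms(1) primeideal.axioms(1) by blast

lemma properly_zippedD:
  assumes "properly_zipped R" and "primeideal p R" and "\<forall>q\<in>F. primeideal q R"
    and "carrier R \<inter> \<Inter>F \<subseteq> p"
  shows "\<exists>q\<in>F. q \<subseteq> p"
proof (cases "F = {}")
  case True
  then have "p = carrier R"
    using assms(4) primeideal_subset_carrier[OF assms(2)] by auto
  then show ?thesis using primeideal.I_notcarr[OF assms(2)] by simp
next
  case False
  then obtain q where "q \<in> F" by blast
  then have "\<Inter>F \<subseteq> carrier R"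
    using assms(3) primeideal_subset_carrier by blast
  then have "\<Inter>F \<subseteq> p" using assms(4) by blast
  then show ?thesis
    using assms(1)[unfolded properly_zipped_def, rule_format, of p F] assms(2,3) by blast
qed

lemma properly_zipped_surj_hom:
  assumes hom: "ring_hom_ring A R h" and "cring A" and surj: "h ` carrier A = carrier R"
    and "properly_zipped A"
  shows "properly_zipped R"
  unfolding properly_zipped_def
proof (intro allI impI, elim conjE)
  fix p F assume p: "primeideal p R" and F: "\<forall>q\<in>F. primeideal q R" and "\<Inter>F \<subseteq> p"
  let ?pull = "\<lambda>q. {a \<in> carrier A. h a \<in> q}"
  have "\<exists>q'\<in>?pull ` F. q' \<subseteq> ?pull p"
  proof (rule properly_zippedD[OF \<open>properly_zipped A\<close>])
    show "primeideal (?pull p) A"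
      using ring_hom_ring.primeideal_vimage[OF hom \<open>cring A\<close> p] .
    show "\<forall>q'\<in>?pull ` F. primeideal q' A"
      using ring_hom_ring.primeideal_vimage[OF hom \<open>cring A\<close>] F by blast
    show "carrier A \<inter> \<Inter>(?pull ` F) \<subseteq> ?pull p"
      using \<open>\<Inter>F \<subseteq> p\<close> by auto
  qed
  then obtain q where "q \<in> F" and "?pull q \<subseteq> ?pull p" by blast
  moreover have "q \<subseteq> h ` carrier A"
    using F \<open>q \<in> F\<close> surj primeideal_subset_carrier by blast
  ultimately show "\<exists>q\<in>F. q \<subseteq> p" by blast
qed

lemma ideal_eq_vimage_of_retraction:
  fixes A (structure)
  assumes "ring_hom_ring A R \<pi>" and "ring_hom_ring R A \<delta>"
    and "\<And>s. s \<in> carrier R \<Longrightarrow> \<pi> (\<delta> s) = s"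
    and "ideal Q A" and "{x \<in> carrier A. \<pi> x = \<zero>\<^bsub>R\<^esub>} \<subseteq> Q"
  shows "Q = {x \<in> carrier A. \<delta> (\<pi> x) \<in> Q}"
proof -
  interpret \<pi>: ring_hom_ring A R \<pi> by fact
  interpret \<delta>: ring_hom_ring R A \<delta> by fact
  interpret Q: ideal Q A by fact
  have diff: "x \<ominus> \<delta> (\<pi> x) \<in> Q" if "x \<in> carrier A" for x
  proof -
    have "x \<ominus> \<delta> (\<pi> x) \<in> {x \<in> carrier A. \<pi> x = \<zero>\<^bsub>R\<^esub>}"
      using that assms(3) by (simp add: a_minus_def \<pi>.S.r_neg)
    then show ?thesis using assms(5) by blast
  qed
  have section_closed: "\<delta> (\<pi> x) \<in> carrier A" if "x \<in> carrier A" for x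
    using that by simp
  show ?thesis
  proof (intro equalityI subsetI)
    fix x assume "x \<in> Q"
    then have x: "x \<in> carrier A" by (rule Q.Icarr)
    have "x \<ominus> (x \<ominus> \<delta> (\<pi> x)) \<in> Q"
      using \<open>x \<in> Q\<close> diff[OF x] unfolding a_minus_def by blast
    moreover have "x \<ominus> (x \<ominus> \<delta> (\<pi> x)) = \<delta> (\<pi> x)"
      using x section_closed[OF x] by algebra
    ultimately show "x \<in> {x \<in> carrier A. \<delta> (\<pi> x) \<in> Q}" using x by simp
  next
    fix x assume "x \<in> {x \<in> carrier A. \<delta> (\<pi> x) \<in> Q}"
    then have x: "x \<in> carrier A" and "\<delta> (\<pi> x) \<in> Q" by auto
    then have "(x \<ominus> \<delta> (\<pi> x)) \<oplus> \<delta> (\<pi> x) \<in> Q" using diff by blast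
    moreover have "(x \<ominus> \<delta> (\<pi> x)) \<oplus> \<delta> (\<pi> x) = x"
      using x section_closed[OF x] by algebra
    ultimately show "x \<in> Q" by simp
  qed
qed

lemma primeideal_annihilating_subsets:
  fixes A (structure)
  assumes "primeideal Q A" and "K \<subseteq> carrier A" and "L \<subseteq> carrier A"
    and "\<And>x y. x \<in> K \<Longrightarrow> y \<in> L \<Longrightarrow> x \<otimes> y = \<zero>"
  shows "K \<subseteq> Q \<or> L \<subseteq> Q"
proof -
  interpret Q: primeideal Q A by fact
  show ?thesis
  proof (rule ccontr)
    assume "\<not> ?thesis"
    then obtain x y where "x \<in> K" "x \<notin> Q" "y \<in> L" "y \<notin> Q" by blast
    moreover have "x \<otimes> y \<in> Q" using assms(4) \<open>x \<in> K\<close> \<open>y \<in> L\<close> by simp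
    ultimately show False using assms(2,3) Q.I_prime by blast
  qed
qed

lemma RDirProd_simps:
  "(a, b) \<otimes>\<^bsub>RDirProd R S\<^esub> (c, d) = (a \<otimes>\<^bsub>R\<^esub> c, b \<otimes>\<^bsub>S\<^esub> d)"
  "(a, b) \<oplus>\<^bsub>RDirProd R S\<^esub> (c, d) = (a \<oplus>\<^bsub>R\<^esub> c, b \<oplus>\<^bsub>S\<^esub> d)"
  "\<one>\<^bsub>RDirProd R S\<^esub> = (\<one>\<^bsub>R\<^esub>, \<one>\<^bsub>S\<^esub>)"
  "\<zero>\<^bsub>RDirProd R S\<^esub> = (\<zero>\<^bsub>R\<^esub>, \<zero>\<^bsub>S\<^esub>)"
  by (simp_all add: RDirProd_def DirProd_def monoid.defs)

lemma RDirProd_a_inv: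
  assumes "ring R" and "ring S" and "a \<in> carrier R" and "b \<in> carrier S"
  shows "\<ominus>\<^bsub>RDirProd R S\<^esub> (a, b) = (\<ominus>\<^bsub>R\<^esub> a, \<ominus>\<^bsub>S\<^esub> b)"
proof -
  interpret P: ring "RDirProd R S" using RDirProd_ring assms(1,2) .
  show ?thesis
    using assms by (intro P.minus_equality) (auto simp: RDirProd_simps RDirProd_carrier ring.ring_simprules)
qed

lemma amalg_dup_simps:
  "(a, b) \<otimes>\<^bsub>amalg_dup R I\<^esub> (c, d) = (a \<otimes>\<^bsub>R\<^esub> c, b \<otimes>\<^bsub>R\<^esub> d)"
  "(a, b) \<oplus>\<^bsub>amalg_dup R I\<^esub> (c, d) = (a \<oplus>\<^bsub>R\<^esub> c, b \<oplus>\<^bsub>R\<^esub> d)"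
  "\<one>\<^bsub>amalg_dup R I\<^esub> = (\<one>\<^bsub>R\<^esub>, \<one>\<^bsub>R\<^esub>)"
  "\<zero>\<^bsub>amalg_dup R I\<^esub> = (\<zero>\<^bsub>R\<^esub>, \<zero>\<^bsub>R\<^esub>)"
  by (simp_all add: amalg_dup_def RDirProd_simps)

lemma RDirProd_carrier_amalg_dup:
  "(RDirProd R R)\<lparr>carrier := carrier (amalg_dup R I)\<rparr> = amalg_dup R I"
  unfolding amalg_dup_def by simp

context
  fixes R (structure) and I
  assumes R: "cring R" and I: "ideal I R"
begin

interpretation cring R by (rule R)
interpretation I: ideal I R by (rule I)

abbreviation dup where "dup \<equiv> amalg_dup R I"

lemma amalg_dup_mem_iff:
  "(a, b) \<in> carrier dup \<longleftrightarrow> a \<in> carrier R \<and> b \<in> carrier R \<and> b \<ominus> a \<in> I"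
proof
  assume "(a, b) \<in> carrier dup"
  then obtain i where "a \<in> carrier R" "i \<in> I" "b = a \<oplus> i"
    by (auto simp: amalg_dup_def RDirProd_def DirProd_def monoid.defs)
  moreover from this have "b \<ominus> a = i" using I.Icarr by algebra
  ultimately show "a \<in> carrier R \<and> b \<in> carrier R \<and> b \<ominus> a \<in> I" using I.Icarr by auto
next
  assume ab: "a \<in> carrier R \<and> b \<in> carrier R \<and> b \<ominus> a \<in> I"
  then have "b = a \<oplus> (b \<ominus> a)" by algebra
  with ab show "(a, b) \<in> carrier dup"
    by (auto simp: amalg_dup_def RDirProd_def DirProd_def monoid.defs)
qed

lemma amalg_dup_diag_mem: "s \<in> carrier R \<Longrightarrow> (s, s) \<in> carrier dup"
  by (simp add: amalg_dup_mem_iff a_minus_def r_neg)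

lemma amalg_dup_cring: "cring dup"
proof -
  interpret P: ring "RDirProd R R" using RDirProd_ring ring_axioms ring_axioms .
  let ?H = "carrier dup"
  have sub: "?H \<subseteq> carrier (RDirProd R R)"
    by (auto simp: RDirProd_carrier amalg_dup_mem_iff)
  have "subring ?H (RDirProd R R)"
  proof (rule P.subringI[OF sub])
    show "\<one>\<^bsub>RDirProd R R\<^esub> \<in> ?H"
      by (simp add: RDirProd_simps amalg_dup_diag_mem)
  next
    fix h assume "h \<in> ?H"
    then obtain a b where h: "h = (a, b)" "a \<in> carrier R" "b \<in> carrier R" "b \<ominus> a \<in> I"
      by (cases h) (auto simp: amalg_dup_mem_iff)
    then have "\<ominus> b \<ominus> \<ominus> a = \<ominus> (b \<ominus> a)" by algebra
    with h show "\<ominus>\<^bsub>RDirProd R R\<^esub> h \<in> ?H"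
      by (simp add: RDirProd_a_inv ring_axioms amalg_dup_mem_iff)
  next
    fix h1 h2 assume "h1 \<in> ?H" "h2 \<in> ?H"
    then obtain a b c d where h: "h1 = (a, b)" "h2 = (c, d)"
      and abcd: "a \<in> carrier R" "b \<in> carrier R" "c \<in> carrier R" "d \<in> carrier R"
      and diff: "b \<ominus> a \<in> I" "d \<ominus> c \<in> I"
      by (cases h1, cases h2) (auto simp: amalg_dup_mem_iff)
    have "b \<otimes> d \<ominus> a \<otimes> c = b \<otimes> (d \<ominus> c) \<oplus> (b \<ominus> a) \<otimes> c" using abcd by algebra
    with abcd diff show "h1 \<otimes>\<^bsub>RDirProd R R\<^esub> h2 \<in> ?H"
      by (simp add: h RDirProd_simps amalg_dup_mem_iff I.I_l_closed I.I_r_closed)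
    have "(b \<oplus> d) \<ominus> (a \<oplus> c) = (b \<ominus> a) \<oplus> (d \<ominus> c)" using abcd by algebra
    with abcd diff show "h1 \<oplus>\<^bsub>RDirProd R R\<^esub> h2 \<in> ?H"
      by (simp add: h RDirProd_simps amalg_dup_mem_iff)
  qed
  then have "subcring ?H (RDirProd R R)"
  proof (rule P.subcringI)
    fix h1 h2 assume "h1 \<in> ?H" "h2 \<in> ?H"
    then show "h1 \<otimes>\<^bsub>RDirProd R R\<^esub> h2 = h2 \<otimes>\<^bsub>RDirProd R R\<^esub> h1"
      by (cases h1, cases h2) (simp add: RDirProd_simps amalg_dup_mem_iff m_comm)
  qed
  then have "cring ((RDirProd R R)\<lparr>carrier := ?H\<rparr>)"
    using P.subcring_iff[OF sub] by blast
  then show ?thesis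
    by (simp only: RDirProd_carrier_amalg_dup)
qed

lemma amalg_dup_proj_hom:
  assumes "\<pi> \<in> {fst, snd}"
  shows "ring_hom_ring dup R \<pi>"
proof (rule ring_hom_ringI[OF cring.axioms(1)[OF amalg_dup_cring] ring_axioms])
  fix x y assume x: "x \<in> carrier dup" and y: "y \<in> carrier dup"
  show "\<pi> x \<in> carrier R"
    using x assms by (cases x) (auto simp: amalg_dup_mem_iff)
  show "\<pi> (x \<otimes>\<^bsub>dup\<^esub> y) = \<pi> x \<otimes> \<pi> y" "\<pi> (x \<oplus>\<^bsub>dup\<^esub> y) = \<pi> x \<oplus> \<pi> y"
    using assms by (cases x, cases y, auto simp: amalg_dup_simps)+
qed (use assms in \<open>auto simp: amalg_dup_simps\<close>)

lemma amalg_dup_diag_hom: "ring_hom_ring R dup (\<lambda>s. (s, s))"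
  by (rule ring_hom_ringI[OF ring_axioms cring.axioms(1)[OF amalg_dup_cring]])
    (simp_all add: amalg_dup_diag_mem amalg_dup_simps)

lemma amalg_dup_fst_surj: "fst ` carrier dup = carrier R"
proof
  show "fst ` carrier dup \<subseteq> carrier R"
    using ring_hom_closed[OF ring_hom_ring.homh[OF amalg_dup_proj_hom]] by blast
  show "carrier R \<subseteq> fst ` carrier dup"
    using amalg_dup_diag_mem by force
qed

lemma amalg_dup_diag_primeideal:
  assumes "primeideal Q dup"
  shows "primeideal {s \<in> carrier R. (s, s) \<in> Q} R"
  using ring_hom_ring.primeideal_vimage[OF amalg_dup_diag_hom R assms] by simp

lemma amalg_dup_primeideal_cases:
  assumes "primeideal Q dup"
  obtains \<pi> where "\<pi> \<in> {fst, snd}"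
    and "Q = {x \<in> carrier dup. \<pi> x \<in> {s \<in> carrier R. (s, s) \<in> Q}}"
proof -
  have "{x \<in> carrier dup. fst x = \<zero>} \<subseteq> Q \<or> {x \<in> carrier dup. snd x = \<zero>} \<subseteq> Q"
  proof (rule primeideal_annihilating_subsets[OF assms])
    fix x y assume "x \<in> {x \<in> carrier dup. fst x = \<zero>}" "y \<in> {y \<in> carrier dup. snd y = \<zero>}"
    then show "x \<otimes>\<^bsub>dup\<^esub> y = \<zero>\<^bsub>dup\<^esub>"
      by (cases x, cases y) (auto simp: amalg_dup_simps amalg_dup_mem_iff)
  qed auto
  then obtain \<pi> where \<pi>: "\<pi> \<in> {fst, snd}" and ker: "{x \<in> carrier dup. \<pi> x = \<zero>} \<subseteq> Q"
    by blast
  have "Q = {x \<in> carrier dup. (\<pi> x, \<pi> x) \<in> Q}"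
    by (rule ideal_eq_vimage_of_retraction[OF amalg_dup_proj_hom[OF \<pi>] amalg_dup_diag_hom _ _ ker])
      (use assms \<pi> in \<open>auto dest: primeideal.axioms(1)\<close>)
  also have "\<dots> = {x \<in> carrier dup. \<pi> x \<in> {s \<in> carrier R. (s, s) \<in> Q}}"
    using ring_hom_closed[OF ring_hom_ring.homh[OF amalg_dup_proj_hom[OF \<pi>]]] by blast
  finally show ?thesis using \<pi> that by blast
qed

lemma amalg_dup_vimage_fst_eq_snd:
  assumes "ideal p R" and "I \<subseteq> p"
  shows "{x \<in> carrier dup. fst x \<in> p} = {x \<in> carrier dup. snd x \<in> p}"
proof -
  interpret p: ideal p R by fact
  have "fst x \<in> p \<longleftrightarrow> snd x \<in> p" if "x \<in> carrier dup" for x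
  proof -
    obtain a b where x: "x = (a, b)" by (cases x)
    with that have ab: "a \<in> carrier R" "b \<in> carrier R" "b \<ominus> a \<in> p"
      using assms(2) by (auto simp: amalg_dup_mem_iff)
    have "b = a \<oplus> (b \<ominus> a)" and "a = b \<oplus> \<ominus> (b \<ominus> a)" using ab(1,2) by algebra+
    then show ?thesis using x ab(3) p.a_closed p.a_inv_closed by (metis fst_conv snd_conv)
  qed
  then show ?thesis by blast
qed

lemma amalg_dup_embed_ideal:
  assumes "(\<pi>, \<pi>') = (fst, snd) \<or> (\<pi>, \<pi>') = (snd, fst)" and "j \<in> I"
  obtains z where "z \<in> carrier dup" and "\<pi> z = j" and "\<pi>' z = \<zero>"
proof -
  have "(j, \<zero>) \<in> carrier dup" and "(\<zero>, j) \<in> carrier dup"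
    using assms(2) I.Icarr[OF assms(2)] by (simp_all add: amalg_dup_mem_iff a_minus_def)
  with assms(1) that show thesis by auto
qed

lemma properly_zipped_amalg_dupD: "properly_zipped dup \<Longrightarrow> properly_zipped R"
  by (rule properly_zipped_surj_hom[OF amalg_dup_proj_hom amalg_dup_cring amalg_dup_fst_surj]) simp

lemma amalg_dup_Inter_vimage_subsetD:
  assumes "(\<pi>, \<pi>') = (fst, snd) \<or> (\<pi>, \<pi>') = (snd, fst)" and "primeideal p R"
    and "t \<in> I" and "t \<notin> p" and "\<forall>q\<in>G \<union> G'. ideal q R"
    and "carrier dup \<inter> \<Inter>((\<lambda>q. {x \<in> carrier dup. \<pi> x \<in> q}) ` G)
           \<inter> \<Inter>((\<lambda>q. {x \<in> carrier dup. \<pi>' x \<in> q}) ` G') \<subseteq> {x \<in> carrier dup. \<pi> x \<in> p}"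
  shows "carrier R \<inter> \<Inter>G \<subseteq> p"
proof
  interpret p: primeideal p R by fact
  fix s assume s: "s \<in> carrier R \<inter> \<Inter>G"
  have t: "t \<in> carrier R" using I.Icarr[OF assms(3)] .
  obtain z where z: "z \<in> carrier dup" "\<pi> z = s \<otimes> t" "\<pi>' z = \<zero>"
    using amalg_dup_embed_ideal[OF assms(1) I.I_l_closed[OF assms(3)]] s by blast
  have "\<pi> z \<in> q" if "q \<in> G" for q
  proof -
    have "ideal q R" and "s \<in> q" using that assms(5) s by auto
    then show ?thesis using ideal.I_r_closed[OF _ _ t] z(2) by simp
  qed
  moreover have "\<pi>' z \<in> q" if "q \<in> G'" for q
  proof -
    have "ideal q R" using that assms(5) by blast
    then show ?thesis using z(3) additive_subgroup.zero_closed ideal.axioms(1) by metis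
  qed
  ultimately have "z \<in> {x \<in> carrier dup. \<pi> x \<in> p}" using z(1) assms(6) by blast
  then have "s \<otimes> t \<in> p" using z(2) by simp
  then show "s \<in> p" using p.I_prime s t assms(4) by blast
qed

lemma properly_zipped_amalg_dupI:
  assumes "properly_zipped R"
  shows "properly_zipped dup"
  unfolding properly_zipped_def
proof (intro allI impI, elim conjE)
  fix Q F assume Q: "primeideal Q dup" and F: "\<forall>q\<in>F. primeideal q dup" and "\<Inter>F \<subseteq> Q"
  define D where "D q = {s \<in> carrier R. (s, s) \<in> q}" for q :: "('a \<times> 'a) set"
  define pull where "pull \<rho> p = {x \<in> carrier dup. \<rho> x \<in> p}" for \<rho> :: "'a \<times> 'a \<Rightarrow> 'a" and p
  have pull_mono: "p \<subseteq> p' \<Longrightarrow> pull \<rho> p \<subseteq> pull \<rho> p'" for \<rho> p p'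
    unfolding pull_def by blast
  obtain \<pi> where "\<pi> \<in> {fst, snd}"
    and Q_vimage: "Q = {x \<in> carrier dup. \<pi> x \<in> {s \<in> carrier R. (s, s) \<in> Q}}"
    by (rule amalg_dup_primeideal_cases[OF Q])
  from Q_vimage have Q_eq: "pull \<pi> (D Q) = Q" unfolding pull_def D_def by (rule sym)
  from \<open>\<pi> \<in> {fst, snd}\<close> obtain \<pi>' :: "'a \<times> 'a \<Rightarrow> 'a"
    where \<pi>\<pi>': "(\<pi>, \<pi>') = (fst, snd) \<or> (\<pi>, \<pi>') = (snd, fst)" by auto
  have F_eq: "pull \<pi> (D q) = q \<or> pull \<pi>' (D q) = q" if "q \<in> F" for q
  proof -
    from F that have "primeideal q dup" by blast
    then obtain \<rho> where "\<rho> \<in> {fst, snd}"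
      and "q = {x \<in> carrier dup. \<rho> x \<in> {s \<in> carrier R. (s, s) \<in> q}}"
      by (rule amalg_dup_primeideal_cases)
    moreover from this(2) have "pull \<rho> (D q) = q" unfolding pull_def D_def by (rule sym)
    ultimately show ?thesis using \<pi>\<pi>' by auto
  qed
  have DQ: "primeideal (D Q) R"
    unfolding D_def by (rule amalg_dup_diag_primeideal[OF Q])
  have DF: "\<forall>p\<in>D ` F'. primeideal p R" if "F' \<subseteq> F" for F'
    using amalg_dup_diag_primeideal F that unfolding D_def by blast
  show "\<exists>q\<in>F. q \<subseteq> Q"
  proof (cases "I \<subseteq> D Q")
    case True
    have "carrier R \<inter> \<Inter>(D ` F) \<subseteq> D Q"
      using \<open>\<Inter>F \<subseteq> Q\<close> unfolding D_def by auto
    then obtain q where "q \<in> F" and "D q \<subseteq> D Q"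
      using properly_zippedD[OF assms DQ DF] by blast
    have "pull fst (D Q) = pull snd (D Q)"
      unfolding pull_def by (rule amalg_dup_vimage_fst_eq_snd[OF primeideal.axioms(1)[OF DQ] True])
    with \<pi>\<pi>' Q_eq have "pull \<pi>' (D Q) = Q" by auto
    with F_eq[OF \<open>q \<in> F\<close>] Q_eq pull_mono[OF \<open>D q \<subseteq> D Q\<close>] have "q \<subseteq> Q" by metis
    with \<open>q \<in> F\<close> show ?thesis by blast
  next
    case False
    then obtain t where t: "t \<in> I" "t \<notin> D Q" by blast
    define F\<^sub>\<pi> where "F\<^sub>\<pi> = {q \<in> F. pull \<pi> (D q) = q}"
    have "F\<^sub>\<pi> \<subseteq> F" unfolding F\<^sub>\<pi>_def by (rule Collect_subset)
    have "carrier dup \<inter> \<Inter>(pull \<pi> ` D ` F\<^sub>\<pi>) \<inter> \<Inter>(pull \<pi>' ` D ` (F - F\<^sub>\<pi>)) \<subseteq> \<Inter>F"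
    proof (intro subsetI InterI)
      fix x q assume x: "x \<in> carrier dup \<inter> \<Inter>(pull \<pi> ` D ` F\<^sub>\<pi>) \<inter> \<Inter>(pull \<pi>' ` D ` (F - F\<^sub>\<pi>))"
        and "q \<in> F"
      show "x \<in> q"
      proof (cases "q \<in> F\<^sub>\<pi>")
        case True
        then have "pull \<pi> (D q) = q" unfolding F\<^sub>\<pi>_def by simp
        moreover have "x \<in> pull \<pi> (D q)" using x True by blast
        ultimately show ?thesis by (rule subst)
      next
        case False
        with F_eq \<open>q \<in> F\<close> have "pull \<pi>' (D q) = q" unfolding F\<^sub>\<pi>_def by blast
        moreover have "x \<in> pull \<pi>' (D q)" using x False \<open>q \<in> F\<close> by blast
        ultimately show ?thesis by (rule subst)
      qed
    qed
    then have "carrier dup \<inter> \<Inter>(pull \<pi> ` D ` F\<^sub>\<pi>) \<inter> \<Inter>(pull \<pi>' ` D ` (F - F\<^sub>\<pi>))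
        \<subseteq> pull \<pi> (D Q)" using \<open>\<Inter>F \<subseteq> Q\<close> unfolding Q_eq by (rule subset_trans)
    moreover have "\<forall>p\<in>D ` F\<^sub>\<pi> \<union> D ` (F - F\<^sub>\<pi>). ideal p R"
      using DF[of F] \<open>F\<^sub>\<pi> \<subseteq> F\<close> primeideal.axioms(1) by blast
    ultimately have "carrier R \<inter> \<Inter>(D ` F\<^sub>\<pi>) \<subseteq> D Q"
      unfolding pull_def by (rule amalg_dup_Inter_vimage_subsetD[OF \<pi>\<pi>' DQ t, rotated])
    then obtain q where "q \<in> F\<^sub>\<pi>" and "D q \<subseteq> D Q"
      using properly_zippedD[OF assms DQ DF[OF \<open>F\<^sub>\<pi> \<subseteq> F\<close>]] by blast
    have "q = pull \<pi> (D q)" using \<open>q \<in> F\<^sub>\<pi>\<close> unfolding F\<^sub>\<pi>_def by simp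
    also have "\<dots> \<subseteq> pull \<pi> (D Q)" by (rule pull_mono) fact
    also have "\<dots> = Q" by (rule Q_eq)
    finally show ?thesis using \<open>q \<in> F\<^sub>\<pi>\<close> \<open>F\<^sub>\<pi> \<subseteq> F\<close> by blast
  qed
qed

end

theorem corollary4p8:
  fixes R :: "('a, 'b) ring_scheme" and I :: "'a set"
  assumes "cring R" and "ideal I R"
  shows "properly_zipped (amalg_dup R I) \<longleftrightarrow> properly_zipped R"
  using properly_zipped_amalg_dupI[OF assms] properly_zipped_amalg_dupD[OF assms] by blast

end
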